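(* Suppose $\Theta=\mathbb R^p$, $\Psi$ has locally Lipschitz continuous gradients, and $\Theta_c\subset\Theta$ is compact. For $\widehat\theta\in\Theta$, $\rho\ge0$ and $v\in\mathbb R^p$ define \[\mathcal R_{\widehat\theta,\rho}(v)=\sup\big\{\Psi(v)-\langle\nabla\Psi(\theta),v\rangle:\ \theta\in\Theta,\ \mathrm{KL}(f(\cdot|\theta)\|f(\cdot|\widehat\theta))\le\rho\big\},\] which equals $\sup_{\mathbb Q\in\mathbb B_{Y|\widehat x_c}}\mathbb E_{\mathbb Q}[\ell_\lambda(\widehat x_c,Y,w)]$ when $v=\lambda(w,\widehat x_c)$, $\widehat\theta=\widehat\theta_c$, $\rho=\rho_c$. For any fixed $\overline\rho>0$ there exist constants $0<m<M<\infty$ depending only on $\Psi$, $\Theta_c$ and $\overline\rho$ such that for every $v\in\mathbb R^p$, every $\rho\in[0,\overline\rho]$ and every $\widehat\theta\in\Theta_c$, \[\sqrt{2\rho/M}\,\|v\|_2\le\mathcal R_{\widehat\theta,\rho}(v)-\mathcal R_{\widehat\theta,0}(v)\le\sqrt{2\rho/m}\,\|v\|_2.\]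
   Context: Exponential family: $\nu$ a measure on $\mathcal Y\subseteq\mathbb R^m$, $h\ge0$, $T:\mathcal Y\to\mathbb R^p$; $f(y|\theta)=h(y)\exp(\langle\theta,T(y)\rangle-\Psi(\theta))$ density w.r.t. $\nu$; $\Theta=\{\theta\in\mathbb R^p:\int he^{\langle\theta,T\rangle}d\nu<\infty\}$, $\Psi(\theta)=\log\int he^{\langle\theta,T\rangle}d\nu$; regular family ($\Theta$ open, $T_i$ affinely independent). Log-loss $\ell_\lambda(x,y,w)=\Psi(\lambda(w,x))-\langle T(y),\lambda(w,x)\rangle$ for a map $\lambda:\mathcal W\times\mathcal X\to\Theta$. KL divergence $\mathrm{KL}(\mathbb P_1\|\mathbb P_2)=\mathbb E_{\mathbb P_1}[\log d\mathbb P_1/d\mathbb P_2]$. $\mathbb B_{Y|\widehat x_c}$ denotes the set of distributions with density $f(\cdot|\theta)$, $\theta\in\Theta$, $\mathrm{KL}(f(\cdot|\theta)\|f(\cdot|\widehat\theta_c))\le\rho_c$. *)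

theory Defs
  imports "HOL-Analysis.Analysis" "HOL-Probability.Probability"
begin

definition grad :: "('a::real_inner \<Rightarrow> real) \<Rightarrow> 'a \<Rightarrow> 'a" where
  "grad f x = (THE D. GDERIV f x :> D)"

definition log_partition ::
  "'y measure \<Rightarrow> ('y \<Rightarrow> real) \<Rightarrow> ('y \<Rightarrow> 'p::euclidean_space) \<Rightarrow> 'p \<Rightarrow> real" where
  "log_partition \<nu> h T \<theta> = ln (enn2real (\<integral>\<^sup>+ y. ennreal (h y * exp (\<theta> \<bullet> T y)) \<partial>\<nu>))"

definition expfam_density ::
  "'y measure \<Rightarrow> ('y \<Rightarrow> real) \<Rightarrow> ('y \<Rightarrow> 'p::euclidean_space) \<Rightarrow> 'p \<Rightarrow> 'y \<Rightarrow> real" where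
  "expfam_density \<nu> h T \<theta> y = h y * exp (\<theta> \<bullet> T y - log_partition \<nu> h T \<theta>)"

definition expfam_dist ::
  "'y measure \<Rightarrow> ('y \<Rightarrow> real) \<Rightarrow> ('y \<Rightarrow> 'p::euclidean_space) \<Rightarrow> 'p \<Rightarrow> 'y measure" where
  "expfam_dist \<nu> h T \<theta> = density \<nu> (\<lambda>y. ennreal (expfam_density \<nu> h T \<theta> y))"

text \<open>KL(P1 || P2) = E_P1[log dP1/dP2] (natural logarithm). Note that the library's
  KL_divergence b M N is the divergence of N from M, i.e. KL(N || M).\<close>
definition KL :: "'y measure \<Rightarrow> 'y measure \<Rightarrow> real" where
  "KL P1 P2 = KL_divergence (exp 1) P2 P1"

definition nat_param_space ::
  "'y measure \<Rightarrow> ('y \<Rightarrow> real) \<Rightarrow> ('y \<Rightarrow> 'p::euclidean_space) \<Rightarrow> 'p set" where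
  "nat_param_space \<nu> h T = {\<theta>. (\<integral>\<^sup>+ y. ennreal (h y * exp (\<theta> \<bullet> T y)) \<partial>\<nu>) < \<infinity>}"

definition affinely_independent_stat ::
  "'y measure \<Rightarrow> ('y \<Rightarrow> real) \<Rightarrow> ('y \<Rightarrow> 'p::euclidean_space) \<Rightarrow> bool" where
  "affinely_independent_stat \<nu> h T \<longleftrightarrow>
     (\<forall>a c. (AE y in \<nu>. h y > 0 \<longrightarrow> a \<bullet> T y = c) \<longrightarrow> a = 0 \<and> c = 0)"

definition locally_lipschitz :: "('a::metric_space \<Rightarrow> 'b::metric_space) \<Rightarrow> bool" where
  "locally_lipschitz g \<longleftrightarrow>
     (\<forall>x. \<exists>e>0. \<exists>L. \<forall>y\<in>ball x e. \<forall>z\<in>ball x e. dist (g y) (g z) \<le> L * dist y z)"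

definition worst_risk ::
  "'y measure \<Rightarrow> ('y \<Rightarrow> real) \<Rightarrow> ('y \<Rightarrow> 'p::euclidean_space) \<Rightarrow> 'p \<Rightarrow> real \<Rightarrow> 'p \<Rightarrow> ereal" where
  "worst_risk \<nu> h T \<theta>h \<rho> v =
     (SUP \<theta> \<in> {\<theta> \<in> nat_param_space \<nu> h T.
                 KL (expfam_dist \<nu> h T \<theta>) (expfam_dist \<nu> h T \<theta>h) \<le> \<rho>}.
        ereal (log_partition \<nu> h T v - grad (log_partition \<nu> h T) \<theta> \<bullet> v))"

end

theory Submission
  imports Defs
begin

(* With Theta = R^p the log-partition function Psi is convex, its gradient is the mean map
   mu theta = E_theta T, and KL (f(.|theta) || f(.|thetah)) is the Bregman divergence
   D thetah theta = Psi thetah - Psi theta - <thetah - theta, mu theta>.  Hence the excess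
   worst-case risk is the supremum of <mu thetah - mu theta, v> over D thetah theta <= rho.

   Upper bound: if the gradient is L-Lipschitz near thetah, comparing Psi along a gradient step
   from thetah with the gradient inequality gives |mu thetah - mu theta|^2 <= 4 (L + rho) D,
   and Cauchy-Schwarz bounds the supremum by sqrt (C rho) |v|.

   Lower bound: theta = thetah - s v/|v| with s of order sqrt rho satisfies D <= L s^2 <= rho,
   and the mean map is strongly monotone on compact sets: <mu thetah - mu theta, v/|v|> >= c s.
   The constant c comes from a damped variance of <u, T>, which is positive by the affine
   independence of T and bounded below on Theta_c x {|u| = 1} by Fatou's lemma and compactness. *)

lemma locally_lipschitz_imp_local_lipschitz:
  assumes "locally_lipschitz g"
  shows "local_lipschitz T X (\<lambda>_. g)"
proof (rule local_lipschitzI)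
  fix t x
  obtain e L where e: "e > 0" and L: "\<forall>y\<in>ball x e. \<forall>z\<in>ball x e. dist (g y) (g z) \<le> L * dist y z"
    using assms unfolding locally_lipschitz_def by blast
  have "(max L 0)-lipschitz_on (cball x (e/2) \<inter> X) g"
  proof (rule lipschitz_onI)
    fix y z assume "y \<in> cball x (e/2) \<inter> X" "z \<in> cball x (e/2) \<inter> X"
    then have "dist (g y) (g z) \<le> L * dist y z" using L e by auto
    also have "\<dots> \<le> max L 0 * dist y z" by (intro mult_right_mono) auto
    finally show "dist (g y) (g z) \<le> max L 0 * dist y z" .
  qed simp
  then show "\<exists>u>0. \<exists>L. \<forall>t\<in>cball t u \<inter> T. L-lipschitz_on (cball x u \<inter> X) g"
    using e by (intro exI[of _ "e/2"]) auto
qed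

lemma locally_lipschitz_continuous_on: "locally_lipschitz g \<Longrightarrow> continuous_on S g"
  using local_lipschitz_continuous_on[where T = "{0::real}" and t = 0,
      OF locally_lipschitz_imp_local_lipschitz]
  by auto

lemma locally_lipschitz_compact_lipschitz_on:
  assumes "locally_lipschitz g" "compact K"
  obtains L where "L-lipschitz_on K g"
  using local_lipschitz_compact_implies_lipschitz[OF
      locally_lipschitz_imp_local_lipschitz[OF assms(1)] assms(2) compact_sing[of "0::real"]]
  by auto

lemma cball_subset_sums_cball:
  fixes K :: "'a::real_normed_vector set"
  assumes "x \<in> K"
  shows "cball x e \<subseteq> {a + b | a b. a \<in> K \<and> b \<in> cball 0 e}"
proof
  fix z assume "z \<in> cball x e"
  then have "z = x + (z - x)" "z - x \<in> cball 0 e"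
    by (auto simp: dist_norm norm_minus_commute)
  with assms show "z \<in> {a + b | a b. a \<in> K \<and> b \<in> cball 0 e}"
    by blast
qed

lemma exp_diff_mult_ge: "exp (min p q) * (p - q)\<^sup>2 \<le> (p - q) * (exp p - exp q)"
  for p q :: real
proof -
  have *: "exp a * (b - a)\<^sup>2 \<le> (b - a) * (exp b - exp a)" if "a \<le> b" for a b :: real
  proof -
    have "exp a * (b - a) \<le> exp b - exp a"
      using mult_left_mono[OF exp_ge_add_one_self[of "b - a"], of "exp a"]
      by (simp add: exp_diff algebra_simps)
    then show ?thesis
      using that mult_left_mono[of "exp a * (b - a)" "exp b - exp a" "b - a"]
      by (simp add: power2_eq_square mult_ac)
  qed
  show ?thesis
    using *[of q p] *[of p q] by (cases "q \<le> p") (simp_all add: min_def power2_commute algebra_simps)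
qed

lemma mult_le_abs_if_le_one:
  fixes s z :: real
  assumes "0 \<le> s" "s \<le> 1"
  shows "s * z \<le> \<bar>z\<bar>"
proof -
  have "s * z \<le> s * \<bar>z\<bar>"
    using assms by (intro mult_left_mono) auto
  also have "\<dots> \<le> \<bar>z\<bar>"
    using assms by (intro mult_left_le_one_le) auto
  finally show ?thesis .
qed

lemma scaled_exp_diff_mult_ge:
  fixes x a s :: real
  assumes "0 < s" "s \<le> 1"
  shows "s * exp (- \<bar>x\<bar> - \<bar>a\<bar>) * (x - a)\<^sup>2 \<le> (a - x) * (exp (- (s * x)) - exp (- (s * a)))"
proof -
  have "- \<bar>x\<bar> - \<bar>a\<bar> \<le> - (s * x)" "- \<bar>x\<bar> - \<bar>a\<bar> \<le> - (s * a)"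
    using assms mult_le_abs_if_le_one[of s x] mult_le_abs_if_le_one[of s a] by auto
  then have "- \<bar>x\<bar> - \<bar>a\<bar> \<le> min (- (s * x)) (- (s * a))"
    by simp
  then have "s * exp (- \<bar>x\<bar> - \<bar>a\<bar>) * (x - a)\<^sup>2 \<le> s * exp (min (- (s * x)) (- (s * a))) * (x - a)\<^sup>2"
    using assms by (intro mult_right_mono mult_left_mono) auto
  also have "\<dots> \<le> (a - x) * (exp (- (s * x)) - exp (- (s * a)))"
  proof -
    have "s * (s * exp (min (- (s * x)) (- (s * a))) * (x - a)\<^sup>2)
        \<le> s * ((a - x) * (exp (- (s * x)) - exp (- (s * a))))"
      using exp_diff_mult_ge[of "- (s * x)" "- (s * a)"] by (simp add: power2_eq_square algebra_simps)
    then show ?thesis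
      using assms by simp
  qed
  finally show ?thesis .
qed

lemma exists_scale_sq_between:
  fixes L \<rho> \<rho>' :: real
  assumes "0 < L" "0 \<le> \<rho>" "\<rho> \<le> \<rho>'"
  obtains s where "0 \<le> s" "s \<le> 1" "L * s\<^sup>2 \<le> \<rho>" "\<rho> \<le> (L + \<rho>') * s\<^sup>2"
proof (cases "\<rho> \<le> L")
  case True
  show ?thesis
  proof (rule that[of "sqrt (\<rho> / L)"])
    have "(sqrt (\<rho> / L))\<^sup>2 = \<rho> / L"
      using assms by simp
    then show "L * (sqrt (\<rho> / L))\<^sup>2 \<le> \<rho>" "\<rho> \<le> (L + \<rho>') * (sqrt (\<rho> / L))\<^sup>2"
      using assms by (simp_all add: field_simps)
  qed (use assms True in auto)
next
  case False
  then show ?thesis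
    using assms by (intro that[of 1]) auto
qed

section \<open>Bregman divergence of a convex function with a gradient\<close>

definition bregman :: "('a::real_inner \<Rightarrow> real) \<Rightarrow> ('a \<Rightarrow> 'a) \<Rightarrow> 'a \<Rightarrow> 'a \<Rightarrow> real" where
  "bregman f g x y = f x - f y - (x - y) \<bullet> g y"

lemma gradient_inequality_imp_has_derivative:
  fixes f :: "'a::real_inner \<Rightarrow> real"
  assumes "f differentiable (at x)" and "\<And>y. f x + (y - x) \<bullet> d \<le> f y"
  shows "(f has_derivative (\<lambda>h. h \<bullet> d)) (at x)"
proof -
  obtain f' where f': "(f has_derivative f') (at x)"
    using assms(1) unfolding differentiable_def by blast
  have "((\<lambda>y. f y - (y - x) \<bullet> d) has_derivative (\<lambda>h. f' h - h \<bullet> d)) (at x)"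
    by (auto intro!: derivative_eq_intros f')
  moreover have "\<forall>\<^sub>F y in at x. f x - (x - x) \<bullet> d \<le> f y - (y - x) \<bullet> d"
    using assms(2) by (simp add: algebra_simps)
  ultimately have "(\<lambda>h. f' h - h \<bullet> d) = (\<lambda>h. 0)"
    by (rule has_derivative_local_min)
  then have "f' = (\<lambda>h. h \<bullet> d)"
    by (metis eq_iff_diff_eq_0)
  with f' show ?thesis by simp
qed

lemma grad_eqI:
  fixes f :: "'a::real_inner \<Rightarrow> real"
  assumes "(f has_derivative (\<lambda>h. h \<bullet> d)) (at x)"
  shows "grad f x = d"
  unfolding grad_def
proof (rule the_equality)
  show "GDERIV f x :> d"
    using assms by (simp add: gderiv_def inner_commute)
  fix d' assume "GDERIV f x :> d'"
  then have "(f has_derivative (\<lambda>h. h \<bullet> d')) (at x)"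
    by (simp add: gderiv_def)
  from has_derivative_unique[OF this assms] have "(d' - d) \<bullet> (d' - d) = 0"
    by (metis inner_diff_left inner_diff_right diff_self)
  then show "d' = d" by simp
qed

locale convex_with_gradient =
  fixes f :: "'a::real_inner \<Rightarrow> real" and g :: "'a \<Rightarrow> 'a"
  assumes has_derivative_gradient: "(f has_derivative (\<lambda>h. h \<bullet> g x)) (at x)"
    and gradient_inequality: "f x + (y - x) \<bullet> g x \<le> f y"
begin

lemma bregman_nonneg: "0 \<le> bregman f g x y"
  using gradient_inequality[of y x] by (simp add: bregman_def)

lemma gradient_eq_if_bregman_eq_0:
  assumes "bregman f g x y = 0"
  shows "g x = g y"
proof -
  have "f x - (x - y) \<bullet> g y \<le> f z - (z - y) \<bullet> g y" for z
    using assms gradient_inequality[of y z] by (simp add: bregman_def)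
  then have "\<forall>\<^sub>F z in at x. f x - (x - y) \<bullet> g y \<le> f z - (z - y) \<bullet> g y"
    by simp
  moreover have "((\<lambda>z. f z - (z - y) \<bullet> g y) has_derivative (\<lambda>h. h \<bullet> g x - h \<bullet> g y)) (at x)"
    by (auto intro!: derivative_eq_intros has_derivative_gradient)
  ultimately have "(\<lambda>h. h \<bullet> g x - h \<bullet> g y) = (\<lambda>h. 0)"
    using has_derivative_local_min by blast
  then have "(g x - g y) \<bullet> g x - (g x - g y) \<bullet> g y = 0"
    by (rule fun_cong)
  then show ?thesis
    by (simp flip: inner_diff_right)
qed

lemma bregman_le_lipschitz:
  assumes "L-lipschitz_on S g" and "convex S" "x \<in> S" "y \<in> S"
  shows "bregman f g y x \<le> L * (norm (y - x))\<^sup>2"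
proof -
  define q where "q = (\<lambda>t. f (x + t *\<^sub>R (y - x)))"
  have "((\<lambda>t. f (x + t *\<^sub>R (y - x))) has_derivative
      (\<lambda>s. (s *\<^sub>R (y - x)) \<bullet> g (x + t *\<^sub>R (y - x)))) (at t)" for t
    by (rule has_derivative_compose[OF _ has_derivative_gradient, of "\<lambda>t. x + t *\<^sub>R (y - x)", simplified])
       (auto intro!: derivative_eq_intros)
  then have "(q has_real_derivative (y - x) \<bullet> g (x + t *\<^sub>R (y - x))) (at t)" for t
    by (simp add: q_def has_field_derivative_def mult_commute_abs)
  from MVT2[of 0 1 q, OF _ this] obtain t where t: "0 < t" "t < 1"
    and mvt: "f y - f x = (y - x) \<bullet> g (x + t *\<^sub>R (y - x))"
    unfolding q_def by auto
  define z where "z = x + t *\<^sub>R (y - x)"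
  have "z = (1 - t) *\<^sub>R x + t *\<^sub>R y" unfolding z_def by (simp add: algebra_simps)
  then have "z \<in> S" using assms(2-4) t by (simp add: convex_def)
  have "(y - x) \<bullet> (g z - g x) \<le> norm (y - x) * norm (g z - g x)"
    by (rule norm_cauchy_schwarz)
  also have "\<dots> \<le> norm (y - x) * (L * norm (z - x))"
    using lipschitz_on_normD[OF assms(1) \<open>z \<in> S\<close> assms(3)] by (intro mult_left_mono) auto
  also have "\<dots> \<le> norm (y - x) * (L * norm (y - x))"
    using t lipschitz_on_nonneg[OF assms(1)] unfolding z_def
    by (intro mult_left_mono) (auto simp: mult_left_le_one_le)
  finally show ?thesis
    using mvt unfolding z_def bregman_def by (simp add: inner_diff_right power2_eq_square mult_ac)
qed

lemma bregman_ge_gradient_step: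
  assumes "L-lipschitz_on (cball x 1) g" and "0 \<le> t" "t * norm (g x - g y) \<le> 1"
  shows "t * (norm (g x - g y))\<^sup>2 - L * t\<^sup>2 * (norm (g x - g y))\<^sup>2 \<le> bregman f g x y"
proof -
  define d where "d = g x - g y"
  define z where "z = x - t *\<^sub>R d"
  have "norm (z - x) = t * norm d" unfolding z_def using assms(2) by simp
  then have "z \<in> cball x 1" using assms(3) by (simp add: d_def dist_norm norm_minus_commute)
  then have "f z - f x - (z - x) \<bullet> g x \<le> L * (t * norm d)\<^sup>2"
    using bregman_le_lipschitz[OF assms(1) convex_cball, of x z] \<open>norm (z - x) = t * norm d\<close>
    by (simp add: bregman_def)
  moreover have "f y + (z - y) \<bullet> g y \<le> f z" by (rule gradient_inequality)
  moreover have "(z - y) \<bullet> g y - (z - x) \<bullet> g x = (x - y) \<bullet> g y + t * (norm d)\<^sup>2"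
    unfolding z_def d_def by (simp add: inner_diff_left inner_diff_right power2_norm_eq_inner algebra_simps)
  ultimately show ?thesis
    unfolding d_def[symmetric] bregman_def by (simp add: power_mult_distrib algebra_simps)
qed

lemma norm_gradient_diff_sq_le_bregman:
  assumes L: "L-lipschitz_on (cball x 1) g" and "bregman f g x y \<le> \<rho>"
  shows "(norm (g x - g y))\<^sup>2 \<le> 4 * (L + \<rho>) * bregman f g x y"
proof -
  define n where "n = norm (g x - g y)"
  define D where "D = bregman f g x y"
  have "0 \<le> L" "0 \<le> D" "D \<le> \<rho>"
    using lipschitz_on_nonneg[OF L] bregman_nonneg assms(2) by (auto simp: D_def)
  then have "0 \<le> L * D" "0 \<le> \<rho> * D" by simp_all
  \<comment> \<open>Step length \<open>1 / (2 * L)\<close> for a small gradient gap \<open>n\<close>, and \<open>1 / n\<close> otherwise.\<close>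
  consider "n = 0" | "0 < n" "n \<le> 2 * L" | "2 * L < n"
    using \<open>0 \<le> L\<close> n_def by fastforce
  then show ?thesis
  proof cases
    case 1
    then show ?thesis using \<open>0 \<le> L\<close> \<open>0 \<le> D\<close> \<open>D \<le> \<rho>\<close> by (simp add: n_def D_def)
  next
    case 2
    have "1 / (2 * L) * n\<^sup>2 - L * (1 / (2 * L))\<^sup>2 * n\<^sup>2 \<le> D"
      using bregman_ge_gradient_step[OF L, of "1 / (2 * L)" y] 2 by (simp add: n_def D_def)
    then have "n\<^sup>2 \<le> 4 * L * D"
      using 2 by (simp add: field_simps power2_eq_square)
    then show ?thesis
      using \<open>0 \<le> \<rho> * D\<close> by (simp add: n_def D_def algebra_simps)
  next
    case 3
    have "1 / n * n\<^sup>2 - L * (1 / n)\<^sup>2 * n\<^sup>2 \<le> D"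
      using bregman_ge_gradient_step[OF L, of "1 / n" y] 3 \<open>0 \<le> L\<close> by (simp add: n_def D_def)
    then have "n \<le> 2 * D"
      using 3 \<open>0 \<le> L\<close> by (simp add: field_simps power2_eq_square)
    then have "n\<^sup>2 \<le> (2 * \<rho>) * (2 * D)"
      using \<open>D \<le> \<rho>\<close> 3 \<open>0 \<le> L\<close> unfolding power2_eq_square by (intro mult_mono) auto
    then show ?thesis
      using \<open>0 \<le> L * D\<close> by (simp add: n_def D_def algebra_simps)
  qed
qed

end

section \<open>Exponential families with full natural parameter space\<close>

locale exponential_family =
  fixes \<nu> :: "'y measure" and h :: "'y \<Rightarrow> real" and T :: "'y \<Rightarrow> 'p::euclidean_space"
  assumes h_measurable[measurable]: "h \<in> borel_measurable \<nu>"
    and h_nonneg: "0 \<le> h y"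
    and T_measurable[measurable]: "T \<in> borel_measurable \<nu>"
    and nat_param_space_UNIV: "nat_param_space \<nu> h T = UNIV"
    and regular: "affinely_independent_stat \<nu> h T"
    and log_partition_differentiable: "log_partition \<nu> h T differentiable (at \<theta>)"
begin

abbreviation \<Psi> :: "'p \<Rightarrow> real" where "\<Psi> \<equiv> log_partition \<nu> h T"

definition weight :: "'p \<Rightarrow> 'y \<Rightarrow> real" where
  "weight \<theta> y = h y * exp (\<theta> \<bullet> T y)"

definition Z :: "'p \<Rightarrow> real" where
  "Z \<theta> = (\<integral>y. weight \<theta> y \<partial>\<nu>)"

definition mean :: "'p \<Rightarrow> 'p" where
  "mean \<theta> = (1 / Z \<theta>) *\<^sub>R (\<integral>y. weight \<theta> y *\<^sub>R T y \<partial>\<nu>)"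

lemma weight_measurable[measurable]: "weight \<theta> \<in> borel_measurable \<nu>"
  unfolding weight_def by measurable

lemma weight_nonneg: "0 \<le> weight \<theta> y"
  by (simp add: weight_def h_nonneg)

lemma weight_add: "weight (\<theta> + a) y = weight \<theta> y * exp (a \<bullet> T y)"
  by (simp add: weight_def inner_add_left exp_add)

lemma weight_diff: "weight (\<theta> - a) y = weight \<theta> y * exp (- (a \<bullet> T y))"
  using weight_add[of \<theta> "- a"] by simp

lemma nn_integral_weight_finite: "(\<integral>\<^sup>+ y. ennreal (weight \<theta> y) \<partial>\<nu>) < \<infinity>"
  using nat_param_space_UNIV by (auto simp: nat_param_space_def weight_def)

lemma weight_integrable: "integrable \<nu> (weight \<theta>)"
  using nn_integral_weight_finite weight_nonneg by (intro integrableI_nonneg) auto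

lemma nn_integral_weight: "(\<integral>\<^sup>+ y. ennreal (weight \<theta> y) \<partial>\<nu>) = ennreal (Z \<theta>)"
  unfolding Z_def using weight_integrable weight_nonneg by (intro nn_integral_eq_integral) auto

lemma Z_pos: "0 < Z \<theta>"
proof (rule ccontr)
  assume "\<not> 0 < Z \<theta>"
  moreover have "0 \<le> Z \<theta>"
    unfolding Z_def using weight_nonneg by simp
  ultimately have "(\<integral>\<^sup>+ y. ennreal (weight \<theta> y) \<partial>\<nu>) = 0"
    by (simp add: nn_integral_weight)
  then have "AE y in \<nu>. ennreal (weight \<theta> y) = 0"
    by (subst (asm) nn_integral_0_iff_AE) auto
  then have "AE y in \<nu>. 0 < h y \<longrightarrow> 0 \<bullet> T y = 1"
    by eventually_elim (auto simp: weight_def ennreal_eq_0_iff mult_le_0_iff)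
  from regular[unfolded affinely_independent_stat_def, rule_format, OF this]
  show False by simp
qed

lemma log_partition_eq: "\<Psi> \<theta> = ln (Z \<theta>)"
  using nn_integral_weight[of \<theta>] Z_pos[of \<theta>] by (simp add: log_partition_def weight_def)

lemma Z_eq_exp: "Z \<theta> = exp (\<Psi> \<theta>)"
  using Z_pos[of \<theta>] by (simp add: log_partition_eq)

lemma weight_mult_inner_integrable: "integrable \<nu> (\<lambda>y. weight \<theta> y * (a \<bullet> T y))"
proof (rule Bochner_Integration.integrable_bound)
  show "integrable \<nu> (\<lambda>y. weight (\<theta> + a) y + weight (\<theta> - a) y)"
    using weight_integrable by auto
  show "AE y in \<nu>. norm (weight \<theta> y * (a \<bullet> T y)) \<le> norm (weight (\<theta> + a) y + weight (\<theta> - a) y)"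
  proof (rule AE_I2)
    fix y
    have "\<bar>x\<bar> \<le> exp x + exp (- x)" for x :: real
      using exp_ge_add_one_self[of x] exp_ge_add_one_self[of "- x"] exp_gt_zero[of x] exp_gt_zero[of "- x"]
      by linarith
    then have "weight \<theta> y * \<bar>a \<bullet> T y\<bar> \<le> weight \<theta> y * (exp (a \<bullet> T y) + exp (- (a \<bullet> T y)))"
      by (rule mult_left_mono) (rule weight_nonneg)
    then show "norm (weight \<theta> y * (a \<bullet> T y)) \<le> norm (weight (\<theta> + a) y + weight (\<theta> - a) y)"
      using weight_nonneg[of \<theta> y] weight_nonneg[of "\<theta> + a" y] weight_nonneg[of "\<theta> - a" y]
      by (simp add: weight_add weight_diff abs_mult distrib_left)
  qed
qed simp

lemma weight_scaleR_integrable: "integrable \<nu> (\<lambda>y. weight \<theta> y *\<^sub>R T y)"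
proof -
  have "weight \<theta> y *\<^sub>R T y = (\<Sum>b\<in>Basis. (weight \<theta> y * (b \<bullet> T y)) *\<^sub>R b)" for y
    by (subst euclidean_representation[symmetric, of "T y"]) (simp add: scaleR_sum_right inner_commute)
  then show ?thesis
    using weight_mult_inner_integrable by simp
qed

lemma integral_weight_mult_inner: "(\<integral>y. weight \<theta> y * (a \<bullet> T y) \<partial>\<nu>) = Z \<theta> * (a \<bullet> mean \<theta>)"
proof -
  have "(\<integral>y. weight \<theta> y * (a \<bullet> T y) \<partial>\<nu>) = (\<integral>y. a \<bullet> (weight \<theta> y *\<^sub>R T y) \<partial>\<nu>)"
    by simp
  also have "\<dots> = a \<bullet> (\<integral>y. weight \<theta> y *\<^sub>R T y \<partial>\<nu>)"
    by (intro integral_inner_right weight_scaleR_integrable)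
  finally show ?thesis
    using Z_pos[of \<theta>] by (simp add: mean_def)
qed

lemma log_partition_gradient_inequality: "\<Psi> \<theta> + (\<theta>' - \<theta>) \<bullet> mean \<theta> \<le> \<Psi> \<theta>'"
proof -
  \<comment> \<open>Jensen: \<open>exp\<close> lies above its tangent at \<open>c\<close>, the mean of \<open>a \<bullet> T\<close> under \<open>\<theta>\<close>.\<close>
  define a where "a = \<theta>' - \<theta>"
  define c where "c = a \<bullet> mean \<theta>"
  have "(\<integral>y. exp c * (weight \<theta> y * (1 + (a \<bullet> T y - c))) \<partial>\<nu>)
      = (\<integral>y. exp c * (1 - c) * weight \<theta> y + exp c * (weight \<theta> y * (a \<bullet> T y)) \<partial>\<nu>)"
    by (simp add: algebra_simps)
  also have "\<dots> = exp c * (1 - c) * Z \<theta> + exp c * (\<integral>y. weight \<theta> y * (a \<bullet> T y) \<partial>\<nu>)"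
    using weight_integrable weight_mult_inner_integrable by (simp add: Z_def)
  also have "\<dots> = exp c * Z \<theta>"
    unfolding integral_weight_mult_inner c_def by (simp add: algebra_simps)
  finally have "exp c * Z \<theta> = (\<integral>y. exp c * (weight \<theta> y * (1 + (a \<bullet> T y - c))) \<partial>\<nu>)" ..
  also have "\<dots> \<le> (\<integral>y. weight (\<theta> + a) y \<partial>\<nu>)"
  proof (rule integral_mono)
    show "integrable \<nu> (\<lambda>y. exp c * (weight \<theta> y * (1 + (a \<bullet> T y - c))))"
      using weight_integrable weight_mult_inner_integrable by (simp add: algebra_simps)
    fix y
    have "exp c * (1 + (a \<bullet> T y - c)) \<le> exp c * exp (a \<bullet> T y - c)"
      by (intro mult_left_mono exp_ge_add_one_self) auto
    also have "\<dots> = exp (a \<bullet> T y)"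
      by (simp add: exp_diff)
    finally have "weight \<theta> y * (exp c * (1 + (a \<bullet> T y - c))) \<le> weight \<theta> y * exp (a \<bullet> T y)"
      by (rule mult_left_mono) (rule weight_nonneg)
    then show "exp c * (weight \<theta> y * (1 + (a \<bullet> T y - c))) \<le> weight (\<theta> + a) y"
      by (simp add: weight_add mult_ac)
  qed (rule weight_integrable)
  finally have "ln (exp c * Z \<theta>) \<le> ln (Z \<theta>')"
    using Z_pos by (simp add: a_def Z_def)
  then show ?thesis
    using Z_pos[of \<theta>] by (simp add: log_partition_eq ln_mult a_def c_def)
qed

lemma log_partition_has_derivative: "(\<Psi> has_derivative (\<lambda>h. h \<bullet> mean \<theta>)) (at \<theta>)"
  using log_partition_differentiable log_partition_gradient_inequality
  by (rule gradient_inequality_imp_has_derivative)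

sublocale convex_with_gradient \<Psi> mean
  by unfold_locales (fact log_partition_has_derivative log_partition_gradient_inequality)+

lemma grad_log_partition: "grad \<Psi> = mean"
  by (intro ext grad_eqI log_partition_has_derivative)

lemma expfam_density_eq: "expfam_density \<nu> h T \<theta> y = weight \<theta> y / Z \<theta>"
  using Z_pos[of \<theta>] by (simp add: expfam_density_def weight_def log_partition_eq exp_diff)

lemma finite_measure_expfam_dist: "finite_measure (expfam_dist \<nu> h T \<theta>)"
proof
  have "emeasure (expfam_dist \<nu> h T \<theta>) (space (expfam_dist \<nu> h T \<theta>))
      = (\<integral>\<^sup>+ y. ennreal (weight \<theta> y / Z \<theta>) \<partial>\<nu>)"
    by (simp add: expfam_dist_def emeasure_density expfam_density_eq)
  also have "\<dots> = ennreal (\<integral>y. weight \<theta> y / Z \<theta> \<partial>\<nu>)"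
    using weight_integrable weight_nonneg Z_pos[of \<theta>]
    by (intro nn_integral_eq_integral) auto
  finally show "emeasure (expfam_dist \<nu> h T \<theta>) (space (expfam_dist \<nu> h T \<theta>)) \<noteq> \<infinity>"
    by simp
qed

lemma KL_eq_bregman: "KL (expfam_dist \<nu> h T \<theta>) (expfam_dist \<nu> h T \<theta>') = bregman \<Psi> mean \<theta>' \<theta>"
proof -
  let ?f = "expfam_density \<nu> h T" and ?P = "expfam_dist \<nu> h T"
  define r where "r y = exp ((\<theta> - \<theta>') \<bullet> T y - \<Psi> \<theta> + \<Psi> \<theta>')" for y
  have f_r: "?f \<theta>' y * r y = ?f \<theta> y" for y
    by (simp add: expfam_density_def r_def inner_diff_left flip: exp_add)
  have f_nonneg: "0 \<le> ?f \<theta> y" for \<theta> y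
    by (simp add: expfam_density_eq divide_nonneg_pos weight_nonneg Z_pos)
  have [measurable]: "r \<in> borel_measurable \<nu>"
    unfolding r_def[abs_def] by measurable
  then have [measurable]: "r \<in> borel_measurable (?P \<theta>')"
    by (simp add: expfam_dist_def)
  have [measurable]: "?f \<theta> \<in> borel_measurable \<nu>" for \<theta>
    unfolding expfam_density_eq[abs_def] by measurable
  have "?P \<theta> = density (?P \<theta>') (\<lambda>y. ennreal (r y))"
    unfolding expfam_dist_def
    by (subst density_density_eq)
       (auto simp: f_r[symmetric] ennreal_mult' f_nonneg intro!: density_cong)
  interpret finite_measure "?P \<theta>'"
    by (rule finite_measure_expfam_dist)
  have "KL (?P \<theta>) (?P \<theta>') = (\<integral>y. r y * ln (r y) \<partial>?P \<theta>')"
    unfolding KL_def \<open>?P \<theta> = _\<close> by (subst KL_density) (auto simp: r_def log_def)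
  also have "\<dots> = (\<integral>y. ?f \<theta>' y * (r y * ln (r y)) \<partial>\<nu>)"
    unfolding expfam_dist_def by (subst integral_density) (auto simp: f_nonneg)
  also have "\<dots> = (\<integral>y. ?f \<theta> y * ((\<theta> - \<theta>') \<bullet> T y - \<Psi> \<theta> + \<Psi> \<theta>') \<partial>\<nu>)"
    unfolding mult.assoc[symmetric] f_r by (simp add: r_def)
  also have "\<dots> = (\<integral>y. 1 / Z \<theta> * (weight \<theta> y * ((\<theta> - \<theta>') \<bullet> T y))
                        + (\<Psi> \<theta>' - \<Psi> \<theta>) / Z \<theta> * weight \<theta> y \<partial>\<nu>)"
    by (simp add: expfam_density_eq add_divide_distrib diff_divide_distrib algebra_simps)
  also have "\<dots> = 1 / Z \<theta> * (\<integral>y. weight \<theta> y * ((\<theta> - \<theta>') \<bullet> T y) \<partial>\<nu>)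
                  + (\<Psi> \<theta>' - \<Psi> \<theta>) / Z \<theta> * Z \<theta>"
    using weight_integrable weight_mult_inner_integrable by (simp add: Z_def)
  also have "\<dots> = (\<theta> - \<theta>') \<bullet> mean \<theta> + (\<Psi> \<theta>' - \<Psi> \<theta>)"
    using Z_pos[of \<theta>] by (simp add: integral_weight_mult_inner)
  finally show ?thesis
    by (simp add: bregman_def inner_diff_left)
qed

lemma worst_risk_eq_SUP_bregman:
  "worst_risk \<nu> h T \<theta>h \<rho> v = (SUP \<theta>\<in>{\<theta>. bregman \<Psi> mean \<theta>h \<theta> \<le> \<rho>}. ereal (\<Psi> v - mean \<theta> \<bullet> v))"
  by (simp add: worst_risk_def nat_param_space_UNIV KL_eq_bregman grad_log_partition)

lemma worst_risk_0: "worst_risk \<nu> h T \<theta>h 0 v = ereal (\<Psi> v - mean \<theta>h \<bullet> v)"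
proof -
  have "mean \<theta> = mean \<theta>h" if "bregman \<Psi> mean \<theta>h \<theta> \<le> 0" for \<theta>
    using that bregman_nonneg[of \<theta>h \<theta>] gradient_eq_if_bregman_eq_0[of \<theta>h \<theta>] by simp
  then have "worst_risk \<nu> h T \<theta>h 0 v
      = (SUP \<theta>\<in>{\<theta>. bregman \<Psi> mean \<theta>h \<theta> \<le> 0}. ereal (\<Psi> v - mean \<theta>h \<bullet> v))"
    unfolding worst_risk_eq_SUP_bregman by (intro SUP_cong) simp_all
  also have "\<dots> = ereal (\<Psi> v - mean \<theta>h \<bullet> v)"
    by (rule SUP_const) (auto simp: bregman_def intro!: exI[of _ \<theta>h])
  finally show ?thesis .
qed

lemma worst_risk_excess:
  assumes "0 \<le> \<rho>"
  shows "worst_risk \<nu> h T \<theta>h \<rho> v - worst_risk \<nu> h T \<theta>h 0 v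
    = (SUP \<theta>\<in>{\<theta>. bregman \<Psi> mean \<theta>h \<theta> \<le> \<rho>}. ereal ((mean \<theta>h - mean \<theta>) \<bullet> v))"
proof -
  have "\<theta>h \<in> {\<theta>. bregman \<Psi> mean \<theta>h \<theta> \<le> \<rho>}"
    using assms by (simp add: bregman_def)
  then have "worst_risk \<nu> h T \<theta>h \<rho> v - worst_risk \<nu> h T \<theta>h 0 v
      = (SUP \<theta>\<in>{\<theta>. bregman \<Psi> mean \<theta>h \<theta> \<le> \<rho>}.
           ereal (\<Psi> v - mean \<theta> \<bullet> v) - ereal (\<Psi> v - mean \<theta>h \<bullet> v))"
    unfolding worst_risk_eq_SUP_bregman[of \<theta>h \<rho>] worst_risk_0
    by (intro SUP_ereal_minus_left[symmetric]) auto
  also have "\<dots> = (SUP \<theta>\<in>{\<theta>. bregman \<Psi> mean \<theta>h \<theta> \<le> \<rho>}. ereal ((mean \<theta>h - mean \<theta>) \<bullet> v))"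
    by (intro SUP_cong) (simp_all add: inner_diff_left)
  finally show ?thesis .
qed

lemma worst_risk_excess_le:
  assumes "0 \<le> \<rho>" "0 \<le> C"
    and "\<And>\<theta>. bregman \<Psi> mean \<theta>h \<theta> \<le> \<rho> \<Longrightarrow> (norm (mean \<theta>h - mean \<theta>))\<^sup>2 \<le> C * bregman \<Psi> mean \<theta>h \<theta>"
  shows "worst_risk \<nu> h T \<theta>h \<rho> v - worst_risk \<nu> h T \<theta>h 0 v \<le> ereal (sqrt (C * \<rho>) * norm v)"
  unfolding worst_risk_excess[OF assms(1)]
proof (rule SUP_least)
  fix \<theta> assume "\<theta> \<in> {\<theta>. bregman \<Psi> mean \<theta>h \<theta> \<le> \<rho>}"
  then have "(norm (mean \<theta>h - mean \<theta>))\<^sup>2 \<le> C * \<rho>"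
    using assms(2,3) by (auto intro: order_trans mult_left_mono)
  then have "norm (mean \<theta>h - mean \<theta>) \<le> sqrt (C * \<rho>)"
    by (rule real_le_rsqrt)
  then have "norm (mean \<theta>h - mean \<theta>) * norm v \<le> sqrt (C * \<rho>) * norm v"
    by (rule mult_right_mono) simp
  with norm_cauchy_schwarz[of "mean \<theta>h - mean \<theta>" v]
  show "ereal ((mean \<theta>h - mean \<theta>) \<bullet> v) \<le> ereal (sqrt (C * \<rho>) * norm v)"
    by simp
qed

lemma worst_risk_excess_ge:
  assumes "0 \<le> \<rho>" "bregman \<Psi> mean \<theta>h \<theta> \<le> \<rho>"
  shows "ereal ((mean \<theta>h - mean \<theta>) \<bullet> v) \<le> worst_risk \<nu> h T \<theta>h \<rho> v - worst_risk \<nu> h T \<theta>h 0 v"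
  unfolding worst_risk_excess[OF assms(1)] using assms(2) by (intro SUP_upper) simp

subsection \<open>Strong monotonicity of the mean map\<close>

(* The factor exp (- |<u, T y>|) stands in for the variance of <u, T>, i.e. for the Hessian of
   Psi, which is never formed: it is exactly what the convexity bound scaled_exp_diff_mult_ge
   leaves under the integral, and it makes integrability automatic. *)
definition damped_variance_integrand :: "'p \<Rightarrow> 'p \<Rightarrow> 'y \<Rightarrow> real" where
  "damped_variance_integrand \<theta> u y = weight \<theta> y * (exp (- \<bar>u \<bullet> T y\<bar>) * (u \<bullet> T y - u \<bullet> mean \<theta>)\<^sup>2)"

definition damped_variance :: "'p \<Rightarrow> 'p \<Rightarrow> real" where
  "damped_variance \<theta> u = (\<integral>y. damped_variance_integrand \<theta> u y \<partial>\<nu>)"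

lemma damped_variance_integrand_measurable[measurable]:
  "damped_variance_integrand \<theta> u \<in> borel_measurable \<nu>"
  unfolding damped_variance_integrand_def[abs_def] by measurable

lemma damped_variance_integrand_nonneg: "0 \<le> damped_variance_integrand \<theta> u y"
  by (simp add: damped_variance_integrand_def weight_nonneg)

lemma weight_shift: "weight (\<theta> - s *\<^sub>R u) y = weight \<theta> y * exp (- (s * (u \<bullet> T y)))"
  using weight_diff[of \<theta> "s *\<^sub>R u" y] by simp

lemma weight_mult_exp_diff_eq:
  "weight \<theta> y * ((a - u \<bullet> T y) * (exp (- (s * (u \<bullet> T y))) - exp (- (s * a))))
     = (a * weight (\<theta> - s *\<^sub>R u) y - weight (\<theta> - s *\<^sub>R u) y * (u \<bullet> T y))
       - exp (- (s * a)) * (a * weight \<theta> y - weight \<theta> y * (u \<bullet> T y))"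
  by (simp add: weight_shift algebra_simps)

lemma weight_mult_exp_diff_integrable:
  "integrable \<nu> (\<lambda>y. weight \<theta> y * ((a - u \<bullet> T y) * (exp (- (s * (u \<bullet> T y))) - exp (- (s * a)))))"
  unfolding weight_mult_exp_diff_eq
  by (intro Bochner_Integration.integrable_diff integrable_mult_right weight_integrable
      weight_mult_inner_integrable)

lemma damped_variance_integrand_le:
  assumes "0 < s" "s \<le> 1"
  shows "s * exp (- \<bar>u \<bullet> mean \<theta>\<bar>) * damped_variance_integrand \<theta> u y
    \<le> weight \<theta> y * ((u \<bullet> mean \<theta> - u \<bullet> T y) * (exp (- (s * (u \<bullet> T y))) - exp (- (s * (u \<bullet> mean \<theta>)))))"
proof -
  have "exp (- \<bar>u \<bullet> T y\<bar> - \<bar>u \<bullet> mean \<theta>\<bar>) = exp (- \<bar>u \<bullet> mean \<theta>\<bar>) * exp (- \<bar>u \<bullet> T y\<bar>)"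
    by (simp add: mult.commute flip: exp_add)
  then show ?thesis
    using mult_left_mono[OF scaled_exp_diff_mult_ge[OF assms, of "u \<bullet> T y" "u \<bullet> mean \<theta>"] weight_nonneg]
    by (simp add: damped_variance_integrand_def mult_ac)
qed

lemma damped_variance_integrable: "integrable \<nu> (damped_variance_integrand \<theta> u)"
proof (rule Bochner_Integration.integrable_bound)
  let ?a = "u \<bullet> mean \<theta>"
  let ?g = "\<lambda>y. exp \<bar>?a\<bar> * (weight \<theta> y * ((?a - u \<bullet> T y) * (exp (- (u \<bullet> T y)) - exp (- ?a))))"
  show "integrable \<nu> ?g"
    using weight_mult_exp_diff_integrable[of \<theta> ?a u 1] by simp
  have "norm (damped_variance_integrand \<theta> u y) \<le> norm (?g y)" for y
  proof -
    have "norm (damped_variance_integrand \<theta> u y) = damped_variance_integrand \<theta> u y"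
      by (simp add: damped_variance_integrand_nonneg)
    also have "\<dots> \<le> ?g y"
      using mult_left_mono[OF damped_variance_integrand_le[of 1 u \<theta> y], of "exp \<bar>?a\<bar>"]
      by (simp add: exp_minus field_simps)
    also have "\<dots> \<le> norm (?g y)"
      by simp
    finally show ?thesis .
  qed
  then show "AE y in \<nu>. norm (damped_variance_integrand \<theta> u y) \<le> norm (?g y)"
    by simp
qed simp

lemma damped_variance_nonneg: "0 \<le> damped_variance \<theta> u"
  unfolding damped_variance_def by (intro integral_nonneg_AE) (simp add: damped_variance_integrand_nonneg)

lemma Z_mult_mean_diff_inner:
  "Z (\<theta> - s *\<^sub>R u) * ((mean \<theta> - mean (\<theta> - s *\<^sub>R u)) \<bullet> u)
    = (\<integral>y. weight \<theta> y * ((u \<bullet> mean \<theta> - u \<bullet> T y) * (exp (- (s * (u \<bullet> T y))) - exp (- (s * (u \<bullet> mean \<theta>))))) \<partial>\<nu>)"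
proof -
  let ?a = "u \<bullet> mean \<theta>" and ?\<theta>' = "\<theta> - s *\<^sub>R u"
  have "(\<integral>y. weight \<theta> y * ((?a - u \<bullet> T y) * (exp (- (s * (u \<bullet> T y))) - exp (- (s * ?a)))) \<partial>\<nu>)
      = (?a * Z ?\<theta>' - Z ?\<theta>' * (u \<bullet> mean ?\<theta>')) - exp (- (s * ?a)) * (?a * Z \<theta> - Z \<theta> * ?a)"
    unfolding weight_mult_exp_diff_eq
    by (simp add: Bochner_Integration.integral_diff weight_integrable weight_mult_inner_integrable
        integral_weight_mult_inner flip: Z_def)
  then show ?thesis
    by (simp add: inner_diff_left inner_commute algebra_simps)
qed

lemma Z_shift_le:
  assumes "0 \<le> s" "s \<le> 1"
  shows "Z (\<theta> - s *\<^sub>R u) \<le> Z (\<theta> + u) + Z (\<theta> - u)"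
proof -
  have "exp (- (s * x)) \<le> exp x + exp (- x)" for x :: real
  proof -
    have "exp (- (s * x)) \<le> exp \<bar>x\<bar>"
      using assms mult_le_abs_if_le_one[of s "- x"] by simp
    also have "\<dots> \<le> exp x + exp (- x)"
      by (cases "0 \<le> x") simp_all
    finally show ?thesis .
  qed
  then have "weight \<theta> y * exp (- (s * (u \<bullet> T y)))
      \<le> weight \<theta> y * (exp (u \<bullet> T y) + exp (- (u \<bullet> T y)))" for y
    by (rule mult_left_mono) (rule weight_nonneg)
  then have "weight (\<theta> - s *\<^sub>R u) y \<le> weight (\<theta> + u) y + weight (\<theta> - u) y" for y
    by (simp add: weight_shift weight_add weight_diff distrib_left)
  then have "Z (\<theta> - s *\<^sub>R u) \<le> (\<integral>y. weight (\<theta> + u) y + weight (\<theta> - u) y \<partial>\<nu>)"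
    unfolding Z_def by (intro integral_mono) (auto simp: weight_integrable)
  also have "\<dots> = Z (\<theta> + u) + Z (\<theta> - u)"
    by (simp add: Z_def weight_integrable)
  finally show ?thesis .
qed

lemma mean_diff_inner_ge_damped_variance:
  assumes "0 < s" "s \<le> 1"
  shows "s * exp (- \<bar>u \<bullet> mean \<theta>\<bar>) * damped_variance \<theta> u / (Z (\<theta> + u) + Z (\<theta> - u))
    \<le> (mean \<theta> - mean (\<theta> - s *\<^sub>R u)) \<bullet> u"
proof -
  have "s * exp (- \<bar>u \<bullet> mean \<theta>\<bar>) * damped_variance \<theta> u
      = (\<integral>y. s * exp (- \<bar>u \<bullet> mean \<theta>\<bar>) * damped_variance_integrand \<theta> u y \<partial>\<nu>)"
    by (simp add: damped_variance_def)
  also have "\<dots> \<le> Z (\<theta> - s *\<^sub>R u) * ((mean \<theta> - mean (\<theta> - s *\<^sub>R u)) \<bullet> u)"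
    unfolding Z_mult_mean_diff_inner
    by (intro integral_mono integrable_mult_right damped_variance_integrable
        weight_mult_exp_diff_integrable damped_variance_integrand_le assms)
  finally have "s * exp (- \<bar>u \<bullet> mean \<theta>\<bar>) * damped_variance \<theta> u
      \<le> Z (\<theta> - s *\<^sub>R u) * ((mean \<theta> - mean (\<theta> - s *\<^sub>R u)) \<bullet> u)" .
  then have "s * exp (- \<bar>u \<bullet> mean \<theta>\<bar>) * damped_variance \<theta> u / Z (\<theta> - s *\<^sub>R u)
      \<le> (mean \<theta> - mean (\<theta> - s *\<^sub>R u)) \<bullet> u"
    using Z_pos by (simp add: pos_divide_le_eq mult.commute)
  moreover have "s * exp (- \<bar>u \<bullet> mean \<theta>\<bar>) * damped_variance \<theta> u / (Z (\<theta> + u) + Z (\<theta> - u))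
      \<le> s * exp (- \<bar>u \<bullet> mean \<theta>\<bar>) * damped_variance \<theta> u / Z (\<theta> - s *\<^sub>R u)"
    using assms Z_pos[of "\<theta> + u"] Z_pos[of "\<theta> - u"] Z_pos[of "\<theta> - s *\<^sub>R u"] Z_shift_le[of s]
      damped_variance_nonneg
    by (intro divide_left_mono mult_pos_pos) auto
  ultimately show ?thesis
    by linarith
qed

lemma nn_integral_damped_variance:
  "(\<integral>\<^sup>+ y. ennreal (damped_variance_integrand \<theta> u y) \<partial>\<nu>) = ennreal (damped_variance \<theta> u)"
  unfolding damped_variance_def
  by (intro nn_integral_eq_integral damped_variance_integrable) (simp_all add: damped_variance_integrand_nonneg)

lemma damped_variance_pos:
  assumes "u \<noteq> 0"
  shows "0 < damped_variance \<theta> u"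
proof (rule ccontr)
  assume "\<not> 0 < damped_variance \<theta> u"
  then have "damped_variance \<theta> u = 0"
    using damped_variance_nonneg[of \<theta> u] by simp
  then have "(\<integral>\<^sup>+ y. ennreal (damped_variance_integrand \<theta> u y) \<partial>\<nu>) = 0"
    by (simp add: nn_integral_damped_variance)
  then have "AE y in \<nu>. ennreal (damped_variance_integrand \<theta> u y) = 0"
    by (subst (asm) nn_integral_0_iff_AE) auto
  then have "AE y in \<nu>. 0 < h y \<longrightarrow> u \<bullet> T y = u \<bullet> mean \<theta>"
    by eventually_elim
       (auto simp: damped_variance_integrand_def weight_def ennreal_eq_0_iff mult_le_0_iff)
  from regular[unfolded affinely_independent_stat_def, rule_format, OF this]
  show False
    using assms by simp
qed

lemma continuous_on_Z: "continuous_on S Z"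
proof -
  have "continuous_on S \<Psi>"
    using log_partition_has_derivative has_derivative_continuous
    by (intro continuous_at_imp_continuous_on) blast
  then show ?thesis
    unfolding Z_eq_exp[abs_def] by (intro continuous_on_exp)
qed

end

section \<open>Uniform bounds on compact sets of parameters\<close>

locale smooth_exponential_family = exponential_family \<nu> h T
  for \<nu> :: "'y measure" and h :: "'y \<Rightarrow> real" and T :: "'y \<Rightarrow> 'p::euclidean_space" +
  assumes locally_lipschitz_grad: "locally_lipschitz (grad (log_partition \<nu> h T))"
begin

lemma locally_lipschitz_mean: "locally_lipschitz mean"
  using locally_lipschitz_grad by (simp add: grad_log_partition)

lemma isCont_mean: "isCont mean \<theta>"
  using locally_lipschitz_continuous_on[OF locally_lipschitz_mean, of UNIV]
  by (simp add: continuous_on_eq_continuous_at)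

lemma damped_variance_eq_0_if_tendsto_0:
  assumes "\<theta>s \<longlonglongrightarrow> \<theta>" "us \<longlonglongrightarrow> u" "(\<lambda>n. damped_variance (\<theta>s n) (us n)) \<longlonglongrightarrow> 0"
  shows "damped_variance \<theta> u = 0"
proof -
  define F where "F \<theta> u y = ennreal (damped_variance_integrand \<theta> u y)" for \<theta> u y
  have "(\<lambda>n. F (\<theta>s n) (us n) y) \<longlonglongrightarrow> F \<theta> u y" for y
    unfolding F_def damped_variance_integrand_def weight_def
    using assms(1,2) isCont_tendsto_compose[OF isCont_mean assms(1)] by (intro tendsto_intros)
  then have "liminf (\<lambda>n. F (\<theta>s n) (us n) y) = F \<theta> u y" for y
    by (intro lim_imp_Liminf) simp_all
  then have "(\<integral>\<^sup>+ y. F \<theta> u y \<partial>\<nu>) = (\<integral>\<^sup>+ y. liminf (\<lambda>n. F (\<theta>s n) (us n) y) \<partial>\<nu>)"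
    by simp
  also have "\<dots> \<le> liminf (\<lambda>n. \<integral>\<^sup>+ y. F (\<theta>s n) (us n) y \<partial>\<nu>)"
    by (rule nn_integral_liminf) (simp add: F_def)
  also have "\<dots> = 0"
    using assms(3) unfolding F_def nn_integral_damped_variance
    by (intro lim_imp_Liminf) (auto intro: tendsto_ennrealI[where x = 0, simplified])
  finally show ?thesis
    using damped_variance_nonneg[of \<theta> u] by (simp add: F_def nn_integral_damped_variance)
qed

lemma damped_variance_uniform_pos:
  assumes "compact K"
  shows "\<exists>n0>0. \<forall>\<theta>\<in>K. \<forall>u. norm u = 1 \<longrightarrow> n0 \<le> damped_variance \<theta> u"
proof (rule ccontr)
  assume contra: "\<not> ?thesis"
  have "\<exists>p \<in> K \<times> sphere 0 1. damped_variance (fst p) (snd p) < inverse (Suc n)" for n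
  proof -
    have "0 < inverse (real (Suc n))"
      by simp
    with contra have "\<not> (\<forall>\<theta>\<in>K. \<forall>u. norm u = 1 \<longrightarrow> inverse (Suc n) \<le> damped_variance \<theta> u)"
      by blast
    then obtain \<theta> u where "\<theta> \<in> K" "norm u = 1" "damped_variance \<theta> u < inverse (Suc n)"
      by (auto simp: not_le)
    then show ?thesis
      by (intro bexI[of _ "(\<theta>, u)"]) auto
  qed
  then have "\<forall>n. \<exists>p. p \<in> K \<times> sphere 0 1 \<and> damped_variance (fst p) (snd p) < inverse (Suc n)"
    by blast
  from choice[OF this] obtain q where q: "\<And>n. q n \<in> K \<times> sphere 0 1"
    and q_small: "\<And>n. damped_variance (fst (q n)) (snd (q n)) < inverse (Suc n)"
    by blast
  obtain l r where l: "l \<in> K \<times> sphere 0 1" and "strict_mono r" and lim: "(q \<circ> r) \<longlonglongrightarrow> l"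
    using compact_imp_seq_compact[OF compact_Times[OF assms compact_sphere]] q by (metis seq_compactE)
  have small: "(\<lambda>n. damped_variance (fst (q (r n))) (snd (q (r n)))) \<longlonglongrightarrow> 0"
  proof (rule tendsto_sandwich[OF _ _ tendsto_const LIMSEQ_inverse_real_of_nat])
    show "\<forall>\<^sub>F n in sequentially. 0 \<le> damped_variance (fst (q (r n))) (snd (q (r n)))"
      by (simp add: damped_variance_nonneg)
    have "damped_variance (fst (q (r n))) (snd (q (r n))) \<le> inverse (Suc n)" for n
    proof -
      have "inverse (Suc (r n)) \<le> inverse (Suc n)"
        using seq_suble[OF \<open>strict_mono r\<close>, of n] by (simp add: field_simps)
      then show ?thesis
        using q_small[of "r n"] by linarith
    qed
    then show "\<forall>\<^sub>F n in sequentially. damped_variance (fst (q (r n))) (snd (q (r n))) \<le> inverse (Suc n)"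
      by simp
  qed
  have "(\<lambda>n. q (r n)) \<longlonglongrightarrow> l"
    using lim by (simp add: o_def)
  from tendsto_fst[OF this] tendsto_snd[OF this] small
  have "damped_variance (fst l) (snd l) = 0"
    by (rule damped_variance_eq_0_if_tendsto_0)
  moreover have "snd l \<noteq> 0"
    using l by auto
  ultimately show False
    using damped_variance_pos[of "snd l" "fst l"] by simp
qed

lemma mean_strongly_monotone:
  fixes K :: "'p set"
  assumes "compact K"
  obtains c where "0 < c"
    "\<And>\<theta> u s. \<theta> \<in> K \<Longrightarrow> norm u = 1 \<Longrightarrow> 0 \<le> s \<Longrightarrow> s \<le> 1 \<Longrightarrow>
      c * s \<le> (mean \<theta> - mean (\<theta> - s *\<^sub>R u)) \<bullet> u"
proof -
  let ?K1 = "{a + b | a b. a \<in> K \<and> b \<in> cball 0 1}"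
  obtain n0 where "0 < n0" and n0: "\<And>\<theta> u. \<theta> \<in> K \<Longrightarrow> norm u = 1 \<Longrightarrow> n0 \<le> damped_variance \<theta> u"
    using damped_variance_uniform_pos[OF assms] by blast
  have "bounded (mean ` K)"
    using assms locally_lipschitz_continuous_on[OF locally_lipschitz_mean]
    by (intro compact_imp_bounded compact_continuous_image)
  then obtain B where B: "\<And>\<theta>. \<theta> \<in> K \<Longrightarrow> norm (mean \<theta>) \<le> B"
    by (auto simp: bounded_iff)
  have "bounded (Z ` ?K1)"
    using assms by (intro compact_imp_bounded compact_continuous_image continuous_on_Z compact_sums) auto
  then obtain Zb where "0 < Zb" and Zb: "\<And>x. x \<in> ?K1 \<Longrightarrow> Z x \<le> Zb"
    by (auto simp: bounded_pos) (metis abs_ge_self order_trans)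
  show ?thesis
  proof (rule that[of "exp (- B) * n0 / (2 * Zb)"])
    show "0 < exp (- B) * n0 / (2 * Zb)"
      using \<open>0 < n0\<close> \<open>0 < Zb\<close> by simp
    fix \<theta> u :: 'p and s :: real
    assume \<theta>: "\<theta> \<in> K" and u: "norm u = 1" and s: "0 \<le> s" "s \<le> 1"
    show "exp (- B) * n0 / (2 * Zb) * s \<le> (mean \<theta> - mean (\<theta> - s *\<^sub>R u)) \<bullet> u"
    proof (cases "s = 0")
      case False
      have "\<bar>u \<bullet> mean \<theta>\<bar> \<le> B"
        using Cauchy_Schwarz_ineq2[of u "mean \<theta>"] B[OF \<theta>] u by simp
      then have "s * exp (- B) * n0 \<le> s * exp (- \<bar>u \<bullet> mean \<theta>\<bar>) * damped_variance \<theta> u"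
        using s n0[OF \<theta> u] \<open>0 < n0\<close> by (intro mult_mono mult_left_mono) auto
      moreover have "\<theta> + u \<in> cball \<theta> 1" "\<theta> - u \<in> cball \<theta> 1"
        using u by (simp_all add: dist_norm)
      then have "Z (\<theta> + u) \<le> Zb" "Z (\<theta> - u) \<le> Zb"
        using Zb cball_subset_sums_cball[OF \<theta>, of 1] by blast+
      then have "Z (\<theta> + u) + Z (\<theta> - u) \<le> 2 * Zb"
        by simp
      ultimately have "s * exp (- B) * n0 / (2 * Zb)
          \<le> s * exp (- \<bar>u \<bullet> mean \<theta>\<bar>) * damped_variance \<theta> u / (Z (\<theta> + u) + Z (\<theta> - u))"
        using s damped_variance_nonneg Z_pos[of "\<theta> + u"] Z_pos[of "\<theta> - u"]
        by (intro frac_le) auto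
      also have "\<dots> \<le> (mean \<theta> - mean (\<theta> - s *\<^sub>R u)) \<bullet> u"
        using s False by (intro mean_diff_inner_ge_damped_variance) auto
      finally show ?thesis
        by (simp add: mult_ac)
    qed simp
  qed
qed

lemma mean_diff_sq_le_bregman:
  fixes K :: "'p set"
  assumes "compact K" "0 < \<rho>"
  obtains C where "0 < C"
    "\<And>\<theta>h \<theta>. \<theta>h \<in> K \<Longrightarrow> bregman \<Psi> mean \<theta>h \<theta> \<le> \<rho> \<Longrightarrow>
      (norm (mean \<theta>h - mean \<theta>))\<^sup>2 \<le> C * bregman \<Psi> mean \<theta>h \<theta>"
proof -
  obtain L where L: "L-lipschitz_on {a + b | a b. a \<in> K \<and> b \<in> cball 0 1} mean"
    using locally_lipschitz_compact_lipschitz_on[OF locally_lipschitz_mean]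
      compact_sums[OF assms(1) compact_cball] by blast
  show ?thesis
  proof (rule that[of "4 * (L + \<rho>)"])
    show "0 < 4 * (L + \<rho>)"
      using lipschitz_on_nonneg[OF L] assms(2) by simp
    fix \<theta>h \<theta> assume "\<theta>h \<in> K" "bregman \<Psi> mean \<theta>h \<theta> \<le> \<rho>"
    then show "(norm (mean \<theta>h - mean \<theta>))\<^sup>2 \<le> 4 * (L + \<rho>) * bregman \<Psi> mean \<theta>h \<theta>"
      using lipschitz_on_subset[OF L cball_subset_sums_cball]
      by (intro norm_gradient_diff_sq_le_bregman) auto
  qed
qed

lemma bregman_ball_contains_mean_shift:
  fixes K :: "'p set"
  assumes "compact K" "0 < \<rho>bar"
  obtains M where "0 < M"
    "\<And>\<theta>h \<rho> v. \<theta>h \<in> K \<Longrightarrow> 0 \<le> \<rho> \<Longrightarrow> \<rho> \<le> \<rho>bar \<Longrightarrow>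
      \<exists>\<theta>. bregman \<Psi> mean \<theta>h \<theta> \<le> \<rho> \<and> sqrt (2 * \<rho> / M) * norm v \<le> (mean \<theta>h - mean \<theta>) \<bullet> v"
proof -
  obtain L0 where "L0-lipschitz_on {a + b | a b. a \<in> K \<and> b \<in> cball 0 1} mean"
    using locally_lipschitz_compact_lipschitz_on[OF locally_lipschitz_mean]
      compact_sums[OF assms(1) compact_cball] by blast
  then have L: "(L0 + 1)-lipschitz_on {a + b | a b. a \<in> K \<and> b \<in> cball 0 1} mean" "0 < L0 + 1"
    using lipschitz_on_le lipschitz_on_nonneg by fastforce+
  obtain c where "0 < c" and c: "\<And>\<theta> u s. \<theta> \<in> K \<Longrightarrow> norm u = 1 \<Longrightarrow> 0 \<le> s \<Longrightarrow> s \<le> 1 \<Longrightarrow>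
      c * s \<le> (mean \<theta> - mean (\<theta> - s *\<^sub>R u)) \<bullet> u"
    using mean_strongly_monotone[OF assms(1)] by blast
  define M where "M = 2 * (L0 + 1 + \<rho>bar) / c\<^sup>2"
  show ?thesis
  proof (rule that[of M])
    show "0 < M"
      using L(2) assms(2) \<open>0 < c\<close> by (simp add: M_def)
    fix \<theta>h \<rho> and v :: 'p
    assume \<theta>h: "\<theta>h \<in> K" and \<rho>: "0 \<le> \<rho>" "\<rho> \<le> \<rho>bar"
    obtain s where s: "0 \<le> s" "s \<le> 1" "(L0 + 1) * s\<^sup>2 \<le> \<rho>" "\<rho> \<le> (L0 + 1 + \<rho>bar) * s\<^sup>2"
      using exists_scale_sq_between[OF L(2) \<rho>] .
    show "\<exists>\<theta>. bregman \<Psi> mean \<theta>h \<theta> \<le> \<rho> \<and> sqrt (2 * \<rho> / M) * norm v \<le> (mean \<theta>h - mean \<theta>) \<bullet> v"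
    proof (cases "v = 0")
      case True
      then show ?thesis
        using \<rho> by (intro exI[of _ \<theta>h]) (simp add: bregman_def)
    next
      case False
      let ?\<theta> = "\<theta>h - s *\<^sub>R sgn v"
      have "?\<theta> \<in> cball \<theta>h 1"
        using s False by (simp add: dist_norm norm_sgn)
      then have "bregman \<Psi> mean \<theta>h ?\<theta> \<le> (L0 + 1) * (norm (\<theta>h - ?\<theta>))\<^sup>2"
        using lipschitz_on_subset[OF L(1) cball_subset_sums_cball[OF \<theta>h]]
        by (intro bregman_le_lipschitz) auto
      also have "\<dots> \<le> \<rho>"
        using s False by (simp add: norm_sgn)
      finally have in_ball: "bregman \<Psi> mean \<theta>h ?\<theta> \<le> \<rho>" .
      have "sqrt (2 * \<rho> / M) \<le> c * s"
        using mult_right_mono[OF s(4), of "2 * c\<^sup>2"] \<open>0 < c\<close> s L(2) assms(2)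
        by (intro real_le_lsqrt) (simp_all add: M_def field_simps power_mult_distrib)
      then have "sqrt (2 * \<rho> / M) * norm v \<le> (c * s) * norm v"
        by (rule mult_right_mono) simp
      also have "\<dots> \<le> ((mean \<theta>h - mean ?\<theta>) \<bullet> sgn v) * norm v"
        using c[OF \<theta>h _ s(1,2), of "sgn v"] False by (intro mult_right_mono) (auto simp: norm_sgn)
      also have "\<dots> = (mean \<theta>h - mean ?\<theta>) \<bullet> v"
        by (simp add: sgn_div_norm False)
      finally show ?thesis
        using in_ball by blast
    qed
  qed
qed

lemma worst_risk_excess_upper_bound:
  fixes K :: "'p set"
  assumes "compact K" "0 < \<rho>bar"
  obtains m where "0 < m"
    "\<And>\<theta>h \<rho> v. \<theta>h \<in> K \<Longrightarrow> 0 \<le> \<rho> \<Longrightarrow> \<rho> \<le> \<rho>bar \<Longrightarrow>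
      worst_risk \<nu> h T \<theta>h \<rho> v - worst_risk \<nu> h T \<theta>h 0 v \<le> ereal (sqrt (2 * \<rho> / m) * norm v)"
proof -
  obtain C where "0 < C" and C: "\<And>\<theta>h \<theta>. \<theta>h \<in> K \<Longrightarrow> bregman \<Psi> mean \<theta>h \<theta> \<le> \<rho>bar \<Longrightarrow>
      (norm (mean \<theta>h - mean \<theta>))\<^sup>2 \<le> C * bregman \<Psi> mean \<theta>h \<theta>"
    using mean_diff_sq_le_bregman[OF assms] by blast
  show ?thesis
  proof (rule that[of "2 / C"])
    show "0 < 2 / C"
      using \<open>0 < C\<close> by simp
    fix \<theta>h \<rho> and v :: 'p
    assume "\<theta>h \<in> K" "0 \<le> \<rho>" "\<rho> \<le> \<rho>bar"
    then have "worst_risk \<nu> h T \<theta>h \<rho> v - worst_risk \<nu> h T \<theta>h 0 v \<le> ereal (sqrt (C * \<rho>) * norm v)"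
      using \<open>0 < C\<close> C by (intro worst_risk_excess_le) auto
    then show "worst_risk \<nu> h T \<theta>h \<rho> v - worst_risk \<nu> h T \<theta>h 0 v
        \<le> ereal (sqrt (2 * \<rho> / (2 / C)) * norm v)"
      by (simp add: mult.commute)
  qed
qed

lemma worst_risk_excess_lower_bound:
  fixes K :: "'p set"
  assumes "compact K" "0 < \<rho>bar"
  obtains M where "0 < M"
    "\<And>\<theta>h \<rho> v. \<theta>h \<in> K \<Longrightarrow> 0 \<le> \<rho> \<Longrightarrow> \<rho> \<le> \<rho>bar \<Longrightarrow>
      ereal (sqrt (2 * \<rho> / M) * norm v) \<le> worst_risk \<nu> h T \<theta>h \<rho> v - worst_risk \<nu> h T \<theta>h 0 v"
proof -
  obtain M where "0 < M" and M: "\<And>\<theta>h \<rho> v. \<theta>h \<in> K \<Longrightarrow> 0 \<le> \<rho> \<Longrightarrow> \<rho> \<le> \<rho>bar \<Longrightarrow>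
      \<exists>\<theta>. bregman \<Psi> mean \<theta>h \<theta> \<le> \<rho> \<and> sqrt (2 * \<rho> / M) * norm v \<le> (mean \<theta>h - mean \<theta>) \<bullet> v"
    using bregman_ball_contains_mean_shift[OF assms] by blast
  show ?thesis
  proof (rule that[OF \<open>0 < M\<close>])
    fix \<theta>h \<rho> and v :: 'p
    assume "\<theta>h \<in> K" "0 \<le> \<rho>" "\<rho> \<le> \<rho>bar"
    then obtain \<theta> where "bregman \<Psi> mean \<theta>h \<theta> \<le> \<rho>"
      and gain: "sqrt (2 * \<rho> / M) * norm v \<le> (mean \<theta>h - mean \<theta>) \<bullet> v"
      using M by blast
    from gain have "ereal (sqrt (2 * \<rho> / M) * norm v) \<le> ereal ((mean \<theta>h - mean \<theta>) \<bullet> v)"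
      by simp
    also have "\<dots> \<le> worst_risk \<nu> h T \<theta>h \<rho> v - worst_risk \<nu> h T \<theta>h 0 v"
      using \<open>0 \<le> \<rho>\<close> \<open>bregman \<Psi> mean \<theta>h \<theta> \<le> \<rho>\<close> by (rule worst_risk_excess_ge)
    finally show "ereal (sqrt (2 * \<rho> / M) * norm v)
        \<le> worst_risk \<nu> h T \<theta>h \<rho> v - worst_risk \<nu> h T \<theta>h 0 v" .
  qed
qed

end

theorem lemmaC2:
  fixes \<nu> :: "'y::euclidean_space measure"
    and h :: "'y \<Rightarrow> real"
    and T :: "'y \<Rightarrow> real ^ 'p"
    and \<Theta>c :: "(real ^ 'p) set"
    and \<rho>bar :: real
  assumes sets_nu: "sets \<nu> = sets borel"
    and h_meas: "h \<in> borel_measurable \<nu>"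
    and h_nonneg: "\<And>y. h y \<ge> 0"
    and T_meas: "T \<in> borel_measurable \<nu>"
    and Theta_full: "nat_param_space \<nu> h T = UNIV"
    and regular: "affinely_independent_stat \<nu> h T"
    and Psi_diff: "\<And>\<theta>. log_partition \<nu> h T differentiable (at \<theta>)"
    and grad_loc_lip: "locally_lipschitz (grad (log_partition \<nu> h T))"
    and Theta_c: "compact \<Theta>c"
    and rho_bar: "\<rho>bar > 0"
  shows "\<exists>m M. 0 < m \<and> m < M \<and>
           (\<forall>v \<rho> \<theta>h. 0 \<le> \<rho> \<and> \<rho> \<le> \<rho>bar \<and> \<theta>h \<in> \<Theta>c \<longrightarrow>
              ereal (sqrt (2 * \<rho> / M) * norm v)
                \<le> worst_risk \<nu> h T \<theta>h \<rho> v - worst_risk \<nu> h T \<theta>h 0 v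
            \<and> worst_risk \<nu> h T \<theta>h \<rho> v - worst_risk \<nu> h T \<theta>h 0 v
                \<le> ereal (sqrt (2 * \<rho> / m) * norm v))"
proof -
  interpret smooth_exponential_family \<nu> h T
    by unfold_locales (fact h_meas h_nonneg T_meas Theta_full regular Psi_diff grad_loc_lip)+
  obtain m where "0 < m" and upper: "\<And>\<theta>h \<rho> v. \<theta>h \<in> \<Theta>c \<Longrightarrow> 0 \<le> \<rho> \<Longrightarrow> \<rho> \<le> \<rho>bar \<Longrightarrow>
      worst_risk \<nu> h T \<theta>h \<rho> v - worst_risk \<nu> h T \<theta>h 0 v \<le> ereal (sqrt (2 * \<rho> / m) * norm v)"
    using worst_risk_excess_upper_bound[OF Theta_c rho_bar] by blast
  obtain M where "0 < M" and lower: "\<And>\<theta>h \<rho> v. \<theta>h \<in> \<Theta>c \<Longrightarrow> 0 \<le> \<rho> \<Longrightarrow> \<rho> \<le> \<rho>bar \<Longrightarrow>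
      ereal (sqrt (2 * \<rho> / M) * norm v) \<le> worst_risk \<nu> h T \<theta>h \<rho> v - worst_risk \<nu> h T \<theta>h 0 v"
    using worst_risk_excess_lower_bound[OF Theta_c rho_bar] by blast
  \<comment> \<open>Enlarging \<open>M\<close> to ensure \<open>m < M\<close> only weakens the lower bound.\<close>
  have "ereal (sqrt (2 * \<rho> / (M + m)) * norm v) \<le> ereal (sqrt (2 * \<rho> / M) * norm v)"
    if "0 \<le> \<rho>" for \<rho> and v :: "real ^ 'p"
    using that \<open>0 < m\<close> \<open>0 < M\<close> by (simp add: mult_right_mono frac_le)
  with lower have lower': "ereal (sqrt (2 * \<rho> / (M + m)) * norm v)
      \<le> worst_risk \<nu> h T \<theta>h \<rho> v - worst_risk \<nu> h T \<theta>h 0 v"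
    if "\<theta>h \<in> \<Theta>c" "0 \<le> \<rho>" "\<rho> \<le> \<rho>bar" for \<theta>h \<rho> v
    using that order_trans by blast
  show ?thesis
    by (rule exI[of _ m], rule exI[of _ "M + m"]) (use upper lower' \<open>0 < m\<close> \<open>0 < M\<close> in auto)
qed

end
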